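(* Let $n\ge 2$, $T\ge\log n$, $\nu\le 1$, and $\eta=\sqrt{\log(n)/T}$. Consider the following process (Hedge with noisy losses). Set $w^{(1)}_i=1$ for all $i\in[n]$. For $t=1,\dots,T$: output the distribution $p^{(t)}$ on $[n]$ with $p^{(t)}_i=w^{(t)}_i/\sum_j w^{(t)}_j$; then a random loss vector $\hat m^{(t)}\in\mathbb R^n$ is revealed; set $w^{(t+1)}_i=w^{(t)}_i\exp(-\eta\hat m^{(t)}_i)$. Let $m^{(t)}=\mathbb E[\hat m^{(t)}\mid \hat m^{(1)},\dots,\hat m^{(t-1)}]$, and suppose that for every $t$: $m^{(t)}\in[-1,1]^n$, and conditioned on $\hat m^{(1)},\dots,\hat m^{(t-1)}$, each coordinate of $\hat m^{(t)}-m^{(t)}$ is sub-Gaussian with variance proxy $\nu^2$ (i.e. $\mathbb E[\exp(s(\hat m^{(t)}_i-m^{(t)}_i))\mid\text{past}]\le\exp(s^2\nu^2/2)$ for all real $s$). Then for every $i\in[n]$, $$\mathbb E\Big[\sum_{t=1}^T\langle m^{(t)},p^{(t)}\rangle\Big]\le \mathbb E\Big[\sum_{t=1}^T m^{(t)}_i\Big]+4\sqrt{T\log n}.$$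
   Context: $\log$ is the natural logarithm and $[n]=\{1,\dots,n\}$. *)

theory Defs
  imports "HOL-Probability.Probability"
begin

text \<open>Rounds are indexed t = 1,2,...; experts are indexed i in {1..n}.
  A loss process is mh :: nat => nat => 'a => real, where mh t i is the
  random variable hat m^(t)_i on the probability space M.\<close>

definition past_sigma :: "'a measure \<Rightarrow> nat \<Rightarrow> (nat \<Rightarrow> nat \<Rightarrow> 'a \<Rightarrow> real) \<Rightarrow> nat \<Rightarrow> 'a measure" where
  "past_sigma M n mh t = sigma (space M)
     {mh s i -` A \<inter> space M | s i A. 1 \<le> s \<and> s < t \<and> i \<in> {1..n} \<and> A \<in> sets borel}"

definition cond_mean :: "'a measure \<Rightarrow> nat \<Rightarrow> (nat \<Rightarrow> nat \<Rightarrow> 'a \<Rightarrow> real) \<Rightarrow> nat \<Rightarrow> nat \<Rightarrow> 'a \<Rightarrow> real" where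
  "cond_mean M n mh t i = real_cond_exp M (past_sigma M n mh t) (mh t i)"

text \<open>Hedge weights: w^(1)_i = 1, w^(t+1)_i = w^(t)_i * exp(-eta * hat m^(t)_i) for t >= 1.
  (The value at t = 0 is irrelevant.)\<close>
primrec hedge_w :: "real \<Rightarrow> (nat \<Rightarrow> nat \<Rightarrow> 'a \<Rightarrow> real) \<Rightarrow> nat \<Rightarrow> nat \<Rightarrow> 'a \<Rightarrow> real" where
  "hedge_w eta mh 0 i x = 1"
| "hedge_w eta mh (Suc t) i x =
     (if t = 0 then 1 else hedge_w eta mh t i x * exp (- eta * mh t i x))"

definition hedge_p :: "nat \<Rightarrow> real \<Rightarrow> (nat \<Rightarrow> nat \<Rightarrow> 'a \<Rightarrow> real) \<Rightarrow> nat \<Rightarrow> nat \<Rightarrow> 'a \<Rightarrow> real" where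
  "hedge_p n eta mh t i x = hedge_w eta mh t i x / (\<Sum>j\<in>{1..n}. hedge_w eta mh t j x)"

end

theory Submission
  imports Defs
begin

text \<open>The potential \<open>\<Phi>\<^sub>t = ln (\<Sum>\<^sub>j w\<^sub>j\<^sup>(\<^sup>t\<^sup>))\<close> starts at \<open>ln n\<close> and ends above
  \<open>-\<eta> \<Sum>\<^sub>t hat m\<^sub>i\<^sup>(\<^sup>t\<^sup>)\<close>. Writing \<open>hat m = m + (hat m - m)\<close>, each increment is at most
  \<open>\<eta>\<^sup>2 - \<eta> \<langle>m\<^sup>(\<^sup>t\<^sup>), p\<^sup>(\<^sup>t\<^sup>)\<rangle>\<close> plus the logarithm of an average of the noise factors
  \<open>exp (-\<eta> (hat m\<^sub>j - m\<^sub>j))\<close> whose weights depend only on the past, and by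
  sub-Gaussianity that average has expectation at most \<open>exp (\<eta>\<^sup>2 \<nu>\<^sup>2 / 2)\<close>. Taking
  expectations and telescoping bounds \<open>\<eta>\<close> times the expected regret by
  \<open>ln n + T \<eta>\<^sup>2 (1 + \<nu>\<^sup>2 / 2)\<close>, and \<open>\<eta> = sqrt (ln n / T)\<close> makes the regret at most
  \<open>5/2 sqrt (T ln n)\<close>.\<close>

lemma exp_bound_abs:
  fixes x :: real assumes "\<bar>x\<bar> \<le> 1" shows "exp x \<le> 1 + x + x\<^sup>2"
proof (cases "x \<ge> 0")
  case True
  then show ?thesis using exp_bound assms by auto
next
  case False
  have "x * (x * x) \<le> 0" using False by (simp add: mult_nonpos_nonneg)
  then have "(1 - x) * (1 + x + x\<^sup>2) \<ge> 1" by (simp add: algebra_simps power2_eq_square)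
  moreover have "(1 - x) * (1 + x + x\<^sup>2) \<le> exp (- x) * (1 + x + x\<^sup>2)"
  proof (rule mult_right_mono)
    show "1 - x \<le> exp (- x)" using exp_ge_add_one_self[of "- x"] by simp
    show "0 \<le> 1 + x + x\<^sup>2" using assms by (auto simp: abs_le_iff intro!: add_nonneg_nonneg)
  qed
  ultimately have "exp (- x) * (1 + x + x\<^sup>2) \<ge> 1" by linarith
  then show ?thesis by (simp add: exp_minus field_simps)
qed

text \<open>Used in place of Jensen's inequality \<open>E[ln Y] \<le> ln E[Y]\<close>, with \<open>a\<close> the logarithm
  of a bound on \<open>E[Y]\<close>.\<close>
lemma ln_le_shifted:
  fixes y a :: real assumes "0 < y" shows "ln y \<le> a + exp (- a) * y - 1"
proof -
  have "ln y = a + ln (exp (- a) * y)" using assms by (simp add: ln_mult)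
  also have "ln (exp (- a) * y) \<le> exp (- a) * y - 1" using assms by (intro ln_le_minus_one) simp
  finally show ?thesis by simp
qed

lemma ln_sum_exp_weights_le:
  fixes w m :: "'b \<Rightarrow> real" and \<eta> :: real
  assumes "finite J" "J \<noteq> {}" and w: "\<And>j. j \<in> J \<Longrightarrow> 0 < w j"
    and m: "\<And>j. j \<in> J \<Longrightarrow> \<bar>m j\<bar> \<le> 1" and "0 \<le> \<eta>" "\<eta> \<le> 1"
  shows "ln (\<Sum>j\<in>J. w j * exp (- \<eta> * m j)) - ln (\<Sum>j\<in>J. w j)
     \<le> \<eta>\<^sup>2 - \<eta> * (\<Sum>j\<in>J. m j * (w j / (\<Sum>k\<in>J. w k)))"
proof -
  define W where "W = (\<Sum>k\<in>J. w k)"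
  define S where "S = (\<Sum>j\<in>J. w j * exp (- \<eta> * m j))"
  have "0 < W" unfolding W_def using assms by (intro sum_pos) auto
  have "0 < S" unfolding S_def using assms by (intro sum_pos) auto
  have "exp (- \<eta> * m j) \<le> 1 - \<eta> * m j + \<eta>\<^sup>2" if "j \<in> J" for j
  proof -
    have "\<bar>- \<eta> * m j\<bar> \<le> 1" using m[OF that] assms by (simp add: abs_mult mult_le_one)
    then have "exp (- \<eta> * m j) \<le> 1 - \<eta> * m j + (\<eta> * m j)\<^sup>2" using exp_bound_abs by fastforce
    moreover have "(\<eta> * m j)\<^sup>2 \<le> \<eta>\<^sup>2"
      using m[OF that] by (simp add: power_mult_distrib abs_le_square_iff[of "m j" 1, simplified] mult_left_le)
    ultimately show ?thesis by linarith
  qed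
  then have "w j * exp (- \<eta> * m j) \<le> (1 + \<eta>\<^sup>2) * w j - \<eta> * (m j * w j)" if "j \<in> J" for j
    using mult_left_mono[of _ _ "w j"] w[OF that] that by (fastforce simp: algebra_simps)
  then have "S \<le> (\<Sum>j\<in>J. (1 + \<eta>\<^sup>2) * w j - \<eta> * (m j * w j))"
    unfolding S_def by (intro sum_mono)
  also have "\<dots> = (1 + \<eta>\<^sup>2) * W - \<eta> * (\<Sum>j\<in>J. m j * w j)"
    by (simp add: W_def sum_subtractf sum_distrib_left)
  also have "\<dots> = W * (1 + \<eta>\<^sup>2 - \<eta> * (\<Sum>j\<in>J. m j * (w j / W)))"
    using \<open>0 < W\<close> by (simp add: times_divide_eq_right flip: sum_divide_distrib) (simp add: field_simps)
  finally have "S / W \<le> 1 + \<eta>\<^sup>2 - \<eta> * (\<Sum>j\<in>J. m j * (w j / W))"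
    using \<open>0 < W\<close> by (subst pos_divide_le_eq) (simp_all add: mult.commute)
  moreover have "ln S - ln W \<le> S / W - 1"
    using \<open>0 < S\<close> \<open>0 < W\<close> ln_le_minus_one[of "S / W"] by (simp add: ln_div)
  ultimately show ?thesis unfolding S_def W_def by linarith
qed

lemma ln_sum_exp_noisy_weights_le:
  fixes w m mh :: "'b \<Rightarrow> real" and \<eta> :: real
  assumes J: "finite J" "J \<noteq> {}" and w: "\<And>j. j \<in> J \<Longrightarrow> 0 < w j"
    and m: "\<And>j. j \<in> J \<Longrightarrow> \<bar>m j\<bar> \<le> 1" and \<eta>: "0 \<le> \<eta>" "\<eta> \<le> 1"
  defines "S \<equiv> \<Sum>k\<in>J. w k * exp (- \<eta> * m k)"
  shows "ln (\<Sum>j\<in>J. w j * exp (- \<eta> * mh j)) - ln (\<Sum>j\<in>J. w j)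
     \<le> \<eta>\<^sup>2 - \<eta> * (\<Sum>j\<in>J. m j * (w j / (\<Sum>k\<in>J. w k)))
       + ln (\<Sum>j\<in>J. w j * exp (- \<eta> * m j) / S * exp (- \<eta> * (mh j - m j)))"
proof -
  define Y where "Y = (\<Sum>j\<in>J. w j * exp (- \<eta> * m j) / S * exp (- \<eta> * (mh j - m j)))"
  have "0 < S" unfolding S_def using assms by (intro sum_pos) auto
  have "0 < Y" unfolding Y_def using assms \<open>0 < S\<close> by (intro sum_pos) auto
  have "(\<Sum>j\<in>J. w j * exp (- \<eta> * mh j)) = S * Y"
    unfolding Y_def sum_distrib_left using \<open>0 < S\<close>
    by (intro sum.cong refl) (simp add: field_simps flip: exp_add)
  then have "ln (\<Sum>j\<in>J. w j * exp (- \<eta> * mh j)) = ln S + ln Y"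
    using \<open>0 < S\<close> \<open>0 < Y\<close> by (simp add: ln_mult)
  moreover have "ln S - ln (\<Sum>j\<in>J. w j) \<le> \<eta>\<^sup>2 - \<eta> * (\<Sum>j\<in>J. m j * (w j / (\<Sum>k\<in>J. w k)))"
    unfolding S_def by (rule ln_sum_exp_weights_le[OF J]) (use w m \<eta> in auto)
  ultimately show ?thesis unfolding Y_def by linarith
qed

lemma (in sigma_finite_subalgebra) integral_mult_le_of_real_cond_exp_le:
  fixes q X :: "'a \<Rightarrow> real"
  assumes q_meas: "q \<in> borel_measurable F" and q_int: "integrable M q"
    and q_range: "\<And>x. x \<in> space M \<Longrightarrow> 0 \<le> q x \<and> q x \<le> 1"
    and X_int: "integrable M X" and cond_le: "AE x in M. real_cond_exp M F X x \<le> c"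
  shows "integrable M (\<lambda>x. q x * X x)" and "(\<integral>x. q x * X x \<partial>M) \<le> c * (\<integral>x. q x \<partial>M)"
proof -
  have [measurable]: "q \<in> borel_measurable M" using measurable_from_subalg[OF subalg q_meas] .
  have X_meas [measurable]: "X \<in> borel_measurable M" using X_int by auto
  show qX_int: "integrable M (\<lambda>x. q x * X x)"
    using q_range
    by (intro Bochner_Integration.integrable_bound[OF X_int]) (auto simp: abs_mult mult_left_le_one_le)
  note cond = real_cond_exp_intg[OF qX_int q_meas X_meas]
  have "(\<integral>x. q x * X x \<partial>M) = (\<integral>x. q x * real_cond_exp M F X x \<partial>M)"
    using cond(2) by simp
  also have "\<dots> \<le> (\<integral>x. c * q x \<partial>M)"
  proof (intro integral_mono_AE cond(1))
    show "integrable M (\<lambda>x. c * q x)" using q_int by simp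
    show "AE x in M. q x * real_cond_exp M F X x \<le> c * q x"
      using cond_le AE_space by eventually_elim (metis q_range mult.commute mult_left_mono)
  qed
  also have "\<dots> = c * (\<integral>x. q x \<partial>M)" by simp
  finally show "(\<integral>x. q x * X x \<partial>M) \<le> c * (\<integral>x. q x \<partial>M)" .
qed

lemma space_past_sigma [simp]: "space (past_sigma M n mh t) = space M"
  unfolding past_sigma_def by (simp add: space_measure_of_conv)

lemma sets_past_sigma: "sets (past_sigma M n mh t) = sigma_sets (space M)
     {mh s i -` A \<inter> space M | s i A. 1 \<le> s \<and> s < t \<and> i \<in> {1..n} \<and> A \<in> sets borel}"
  unfolding past_sigma_def by (rule sets_measure_of) auto

lemma subalgebra_past_sigma:
  assumes "\<And>s i. 1 \<le> s \<Longrightarrow> s < t \<Longrightarrow> i \<in> {1..n} \<Longrightarrow> mh s i \<in> borel_measurable M"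
  shows "subalgebra M (past_sigma M n mh t)"
  unfolding subalgebra_def sets_past_sigma
  using assms measurable_sets by (auto intro!: sets.sigma_sets_subset)

lemma measurable_past_sigma:
  assumes "1 \<le> s" "s < t" "i \<in> {1..n}"
  shows "mh s i \<in> borel_measurable (past_sigma M n mh t)"
proof (rule measurableI)
  fix A :: "real set" assume "A \<in> sets borel"
  then show "mh s i -` A \<inter> space (past_sigma M n mh t) \<in> sets (past_sigma M n mh t)"
    unfolding sets_past_sigma using assms by auto
qed simp

lemma hedge_w_measurable_past_sigma:
  assumes "1 \<le> t" "t \<le> t'" "j \<in> {1..n}"
  shows "hedge_w \<eta> mh t j \<in> borel_measurable (past_sigma M n mh t')"
  using assms
proof (induction t)
  case (Suc t)
  show ?case
  proof (cases "t = 0")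
    case False
    have [measurable]: "hedge_w \<eta> mh t j \<in> borel_measurable (past_sigma M n mh t')"
                       "mh t j \<in> borel_measurable (past_sigma M n mh t')"
      using Suc False by (auto intro: measurable_past_sigma)
    show ?thesis using False by simp
  qed simp
qed simp

lemma hedge_w_pos [simp]: "0 < hedge_w \<eta> mh t j x"
  by (induction t) auto

lemma hedge_w_Suc_eq_exp_sum: "hedge_w \<eta> mh (Suc T) i x = exp (- \<eta> * (\<Sum>t\<in>{1..T}. mh t i x))"
  by (induction T) (simp_all add: algebra_simps flip: exp_add)

locale noisy_hedge = prob_space M for M :: "'a measure" +
  fixes n T :: nat and \<nu> \<eta> :: real and mh :: "nat \<Rightarrow> nat \<Rightarrow> 'a \<Rightarrow> real"
  assumes n_pos: "1 \<le> n" and eta_pos: "0 < \<eta>" and eta_le_1: "\<eta> \<le> 1"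
    and meas: "\<And>t i. t \<in> {1..T} \<Longrightarrow> i \<in> {1..n} \<Longrightarrow> mh t i \<in> borel_measurable M"
    and integ: "\<And>t i. t \<in> {1..T} \<Longrightarrow> i \<in> {1..n} \<Longrightarrow> integrable M (mh t i)"
    and bounded: "\<And>t i. t \<in> {1..T} \<Longrightarrow> i \<in> {1..n} \<Longrightarrow>
        AE x in M. \<bar>cond_mean M n mh t i x\<bar> \<le> 1"
    and subg_int: "\<And>t i s. t \<in> {1..T} \<Longrightarrow> i \<in> {1..n} \<Longrightarrow>
        integrable M (\<lambda>x. exp (s * (mh t i x - cond_mean M n mh t i x)))"
    and subg: "\<And>t i s. t \<in> {1..T} \<Longrightarrow> i \<in> {1..n} \<Longrightarrow>
        AE x in M. real_cond_exp M (past_sigma M n mh t)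
            (\<lambda>x. exp (s * (mh t i x - cond_mean M n mh t i x))) x
          \<le> exp (s\<^sup>2 * \<nu>\<^sup>2 / 2)"
begin

abbreviation "F \<equiv> past_sigma M n mh"
abbreviation "cm \<equiv> cond_mean M n mh"
abbreviation "w \<equiv> hedge_w \<eta> mh"
abbreviation "p \<equiv> hedge_p n \<eta> mh"

definition tilt :: "nat \<Rightarrow> nat \<Rightarrow> 'a \<Rightarrow> real" where
  "tilt t j x = w t j x * exp (- \<eta> * cm t j x) / (\<Sum>k\<in>{1..n}. w t k x * exp (- \<eta> * cm t k x))"

text \<open>Since \<open>\<Sum>\<^sub>j w\<^sub>j exp (-\<eta> hat m\<^sub>j) = (\<Sum>\<^sub>j w\<^sub>j exp (-\<eta> m\<^sub>j)) * tilted_noise\<close>, the noise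
  enters the potential only through this average of the factors \<open>exp (-\<eta> (hat m\<^sub>j - m\<^sub>j))\<close>,
  whose weights \<open>tilt\<close> are known before round \<open>t\<close>.\<close>
definition tilted_noise :: "nat \<Rightarrow> 'a \<Rightarrow> real" where
  "tilted_noise t x = (\<Sum>j\<in>{1..n}. tilt t j x * exp (- \<eta> * (mh t j x - cm t j x)))"

lemma sigma_finite_subalgebra_past:
  assumes "t \<in> {1..T}" shows "sigma_finite_subalgebra M (F t)"
proof -
  have "subalgebra M (F t)" using assms by (intro subalgebra_past_sigma meas) auto
  then show ?thesis
    by (intro finite_measure_subalgebra_is_sigma_finite)
       (simp add: finite_measure_subalgebra_def finite_measure_subalgebra_axioms_def finite_measure_axioms)
qed

lemma integrable_cm: "t \<in> {1..T} \<Longrightarrow> j \<in> {1..n} \<Longrightarrow> integrable M (cm t j)"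
  and integral_cm: "t \<in> {1..T} \<Longrightarrow> j \<in> {1..n} \<Longrightarrow> (\<integral>x. cm t j x \<partial>M) = (\<integral>x. mh t j x \<partial>M)"
  using sigma_finite_subalgebra.real_cond_exp_int[OF sigma_finite_subalgebra_past integ]
  by (simp_all add: cond_mean_def)

lemma sum_w_pos: "0 < (\<Sum>k\<in>{1..n}. w t k x)"
  using n_pos by (intro sum_pos) auto

lemma p_nonneg: "0 \<le> p t j x"
  unfolding hedge_p_def using sum_w_pos by (simp add: less_imp_le)

lemma p_le_1: "j \<in> {1..n} \<Longrightarrow> p t j x \<le> 1"
  unfolding hedge_p_def using sum_w_pos member_le_sum[of j "{1..n}" "\<lambda>k. w t k x"]
  by (simp add: less_imp_le)

lemma tilt_nonneg: "0 \<le> tilt t j x"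
  unfolding tilt_def using n_pos
  by (intro divide_nonneg_pos sum_pos) (auto simp: less_imp_le)

lemma sum_tilt: "(\<Sum>j\<in>{1..n}. tilt t j x) = 1"
proof -
  have "0 < (\<Sum>k\<in>{1..n}. w t k x * exp (- \<eta> * cm t k x))"
    using n_pos by (intro sum_pos) auto
  then show ?thesis unfolding tilt_def by (simp flip: sum_divide_distrib)
qed

lemma tilt_le_1: "j \<in> {1..n} \<Longrightarrow> tilt t j x \<le> 1"
  using member_le_sum[of j "{1..n}" "\<lambda>j. tilt t j x"] tilt_nonneg sum_tilt by simp

lemma tilt_measurable_past:
  assumes "t \<in> {1..T}" "j \<in> {1..n}" shows "tilt t j \<in> borel_measurable (F t)"
proof -
  have [measurable]: "w t k \<in> borel_measurable (F t)" if "k \<in> {1..n}" for k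
    using assms that by (intro hedge_w_measurable_past_sigma) auto
  have [measurable]: "cm t k \<in> borel_measurable (F t)" for k
    unfolding cond_mean_def by (rule borel_measurable_cond_exp)
  show ?thesis unfolding tilt_def[abs_def] using assms(2) by measurable
qed

lemma p_measurable:
  assumes "t \<in> {1..T}" "j \<in> {1..n}" shows "p t j \<in> borel_measurable M"
proof -
  interpret past: sigma_finite_subalgebra M "F t" using sigma_finite_subalgebra_past[OF assms(1)] .
  have [measurable]: "w t k \<in> borel_measurable M" if "k \<in> {1..n}" for k
    by (rule measurable_from_subalg[OF past.subalg hedge_w_measurable_past_sigma]) (use assms that in auto)
  show ?thesis unfolding hedge_p_def[abs_def] using assms(2) by measurable
qed

lemma integrable_cm_mult_p:
  assumes "t \<in> {1..T}" "j \<in> {1..n}" shows "integrable M (\<lambda>x. cm t j x * p t j x)"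
proof (rule Bochner_Integration.integrable_bound[OF integrable_cm[OF assms]])
  show "(\<lambda>x. cm t j x * p t j x) \<in> borel_measurable M"
    using p_measurable[OF assms] borel_measurable_cond_exp2 unfolding cond_mean_def by measurable
  show "AE x in M. norm (cm t j x * p t j x) \<le> norm (cm t j x)"
    using p_nonneg p_le_1[OF assms(2)] by (auto simp: abs_mult intro!: mult_left_le)
qed

lemma integrable_tilt:
  assumes "t \<in> {1..T}" "j \<in> {1..n}" shows "integrable M (tilt t j)"
proof (rule Bochner_Integration.integrable_bound[of M "\<lambda>x. 1 :: real"])
  interpret past: sigma_finite_subalgebra M "F t" using sigma_finite_subalgebra_past[OF assms(1)] .
  show "tilt t j \<in> borel_measurable M"
    by (rule measurable_from_subalg[OF past.subalg tilt_measurable_past[OF assms]])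
  show "AE x in M. norm (tilt t j x) \<le> norm (1 :: real)" using tilt_nonneg tilt_le_1[OF assms(2)] by simp
qed simp

lemma integrable_hedge_loss:
  assumes "t \<in> {1..T}" shows "integrable M (\<lambda>x. \<Sum>j\<in>{1..n}. cm t j x * p t j x)"
  using integrable_cm_mult_p[OF assms] by (rule Bochner_Integration.integrable_sum)

lemma tilted_noise_integral_le:
  assumes "t \<in> {1..T}"
  shows "integrable M (tilted_noise t)" and "(\<integral>x. tilted_noise t x \<partial>M) \<le> exp (\<eta>\<^sup>2 * \<nu>\<^sup>2 / 2)"
proof -
  interpret past: sigma_finite_subalgebra M "F t" using sigma_finite_subalgebra_past[OF assms] .
  have noise_term: "integrable M (\<lambda>x. tilt t j x * exp (- \<eta> * (mh t j x - cm t j x)))"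
    "(\<integral>x. tilt t j x * exp (- \<eta> * (mh t j x - cm t j x)) \<partial>M) \<le> exp (\<eta>\<^sup>2 * \<nu>\<^sup>2 / 2) * (\<integral>x. tilt t j x \<partial>M)"
    if "j \<in> {1..n}" for j
  proof -
    have "\<And>x. 0 \<le> tilt t j x \<and> tilt t j x \<le> 1" using tilt_nonneg tilt_le_1[OF that] by blast
    moreover have "AE x in M. real_cond_exp M (F t) (\<lambda>x. exp (- \<eta> * (mh t j x - cm t j x))) x
        \<le> exp (\<eta>\<^sup>2 * \<nu>\<^sup>2 / 2)"
      using subg[OF assms that, of "- \<eta>"] by simp
    ultimately show "integrable M (\<lambda>x. tilt t j x * exp (- \<eta> * (mh t j x - cm t j x)))"
      "(\<integral>x. tilt t j x * exp (- \<eta> * (mh t j x - cm t j x)) \<partial>M) \<le> exp (\<eta>\<^sup>2 * \<nu>\<^sup>2 / 2) * (\<integral>x. tilt t j x \<partial>M)"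
      using past.integral_mult_le_of_real_cond_exp_le[OF tilt_measurable_past[OF assms that] integrable_tilt[OF assms that]
          _ subg_int[OF assms that]] by blast+
  qed
  show "integrable M (tilted_noise t)"
    unfolding tilted_noise_def[abs_def] using noise_term(1) by (rule Bochner_Integration.integrable_sum)
  have "(\<integral>x. tilted_noise t x \<partial>M) \<le> (\<Sum>j\<in>{1..n}. exp (\<eta>\<^sup>2 * \<nu>\<^sup>2 / 2) * (\<integral>x. tilt t j x \<partial>M))"
    unfolding tilted_noise_def using noise_term
    by (subst Bochner_Integration.integral_sum) (auto intro!: sum_mono)
  also have "\<dots> = exp (\<eta>\<^sup>2 * \<nu>\<^sup>2 / 2) * (\<integral>x. (\<Sum>j\<in>{1..n}. tilt t j x) \<partial>M)"
    using integrable_tilt[OF assms] by (subst Bochner_Integration.integral_sum) (auto simp: sum_distrib_left)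
  also have "\<dots> = exp (\<eta>\<^sup>2 * \<nu>\<^sup>2 / 2)" unfolding sum_tilt by (simp add: prob_space)
  finally show "(\<integral>x. tilted_noise t x \<partial>M) \<le> exp (\<eta>\<^sup>2 * \<nu>\<^sup>2 / 2)" .
qed

lemma tilted_noise_pos: "0 < tilted_noise t x"
proof -
  have "0 < tilt t j x" for j
    unfolding tilt_def using n_pos by (intro divide_pos_pos sum_pos) auto
  then show ?thesis unfolding tilted_noise_def using n_pos by (intro sum_pos) auto
qed

lemma ln_potential_step:
  assumes "t \<in> {1..T}" and "\<forall>j\<in>{1..n}. \<bar>cm t j x\<bar> \<le> 1"
  shows "ln (\<Sum>k\<in>{1..n}. w (Suc t) k x) - ln (\<Sum>k\<in>{1..n}. w t k x)
    \<le> \<eta>\<^sup>2 - \<eta> * (\<Sum>j\<in>{1..n}. cm t j x * p t j x) + ln (tilted_noise t x)"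
proof -
  have "(\<Sum>k\<in>{1..n}. w (Suc t) k x) = (\<Sum>k\<in>{1..n}. w t k x * exp (- \<eta> * mh t k x))"
    using assms(1) by simp
  then show ?thesis
    using ln_sum_exp_noisy_weights_le[of "{1..n}" "\<lambda>j. w t j x" "\<lambda>j. cm t j x" \<eta> "\<lambda>j. mh t j x"]
      assms(2) n_pos eta_pos eta_le_1
    by (simp add: tilted_noise_def tilt_def hedge_p_def)
qed

lemma hedge_potential_bound:
  assumes "i \<in> {1..n}" and "\<forall>t\<in>{1..T}. \<forall>j\<in>{1..n}. \<bar>cm t j x\<bar> \<le> 1"
  shows "- \<eta> * (\<Sum>t\<in>{1..T}. mh t i x) - ln n
    \<le> (\<Sum>t\<in>{1..T}. \<eta>\<^sup>2 - \<eta> * (\<Sum>j\<in>{1..n}. cm t j x * p t j x) + ln (tilted_noise t x))"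
proof -
  define \<Phi> where "\<Phi> t = ln (\<Sum>k\<in>{1..n}. w t k x)" for t
  have "- \<eta> * (\<Sum>t\<in>{1..T}. mh t i x) = ln (w (Suc T) i x)"
    unfolding hedge_w_Suc_eq_exp_sum by simp
  also have "\<dots> \<le> \<Phi> (Suc T)"
    unfolding \<Phi>_def ln_le_cancel_iff[OF hedge_w_pos sum_w_pos]
    using assms(1) by (intro member_le_sum) (simp_all add: less_imp_le del: hedge_w.simps)
  also have "\<Phi> (Suc T) = \<Phi> 1 + (\<Sum>t\<in>{1..T}. \<Phi> (Suc t) - \<Phi> t)"
    by (simp add: sum_Suc_diff)
  also have "\<Phi> 1 = ln n" by (simp add: \<Phi>_def)
  also have "(\<Sum>t\<in>{1..T}. \<Phi> (Suc t) - \<Phi> t)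
      \<le> (\<Sum>t\<in>{1..T}. \<eta>\<^sup>2 - \<eta> * (\<Sum>j\<in>{1..n}. cm t j x * p t j x) + ln (tilted_noise t x))"
    unfolding \<Phi>_def using assms(2) by (intro sum_mono ln_potential_step) auto
  finally show ?thesis by simp
qed

lemma integral_sum_mh:
  assumes "i \<in> {1..n}"
  shows "integrable M (\<lambda>x. \<Sum>t\<in>{1..T}. mh t i x)"
    and "(\<integral>x. (\<Sum>t\<in>{1..T}. mh t i x) \<partial>M) = (\<integral>x. (\<Sum>t\<in>{1..T}. cm t i x) \<partial>M)"
  using integ[OF _ assms] integrable_cm[OF _ assms] integral_cm[OF _ assms]
  by (auto simp: Bochner_Integration.integral_sum)

lemma expected_increment_le:
  assumes "t \<in> {1..T}" and "\<eta>\<^sup>2 * \<nu>\<^sup>2 / 2 \<le> a"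
  defines "R \<equiv> \<lambda>x. \<eta>\<^sup>2 + a - \<eta> * (\<Sum>j\<in>{1..n}. cm t j x * p t j x) + exp (- a) * tilted_noise t x - 1"
  shows "integrable M R" and "(\<integral>x. R x \<partial>M) \<le> \<eta>\<^sup>2 + a - \<eta> * (\<integral>x. (\<Sum>j\<in>{1..n}. cm t j x * p t j x) \<partial>M)"
proof -
  note integrable = integrable_hedge_loss[OF assms(1)] tilted_noise_integral_le(1)[OF assms(1)]
  show "integrable M R" unfolding R_def using integrable by simp
  have "exp (- a) * (\<integral>x. tilted_noise t x \<partial>M) \<le> exp (- a) * exp (\<eta>\<^sup>2 * \<nu>\<^sup>2 / 2)"
    using tilted_noise_integral_le(2)[OF assms(1)] by simp
  also have "\<dots> \<le> 1" using assms(2) by (simp flip: exp_add)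
  finally show "(\<integral>x. R x \<partial>M) \<le> \<eta>\<^sup>2 + a - \<eta> * (\<integral>x. (\<Sum>j\<in>{1..n}. cm t j x * p t j x) \<partial>M)"
    unfolding R_def using integrable by (simp add: prob_space)
qed

theorem expected_regret_bound:
  assumes "i \<in> {1..n}"
  shows "(\<integral>x. (\<Sum>t\<in>{1..T}. \<Sum>j\<in>{1..n}. cm t j x * p t j x) \<partial>M)
    \<le> (\<integral>x. (\<Sum>t\<in>{1..T}. cm t i x) \<partial>M) + ln n / \<eta> + T * \<eta> * (1 + \<nu>\<^sup>2 / 2)"
proof -
  define a where "a = \<eta>\<^sup>2 * \<nu>\<^sup>2 / 2"
  define C where "C t x = (\<Sum>j\<in>{1..n}. cm t j x * p t j x)" for t x
  define R where "R t x = \<eta>\<^sup>2 + a - \<eta> * C t x + exp (- a) * tilted_noise t x - 1" for t x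
  have R_int: "integrable M (R t)"
    and integral_R: "(\<integral>x. R t x \<partial>M) \<le> \<eta>\<^sup>2 + a - \<eta> * (\<integral>x. C t x \<partial>M)" if "t \<in> {1..T}" for t
    using expected_increment_le[OF that, of a] unfolding a_def R_def[abs_def] C_def by simp_all
  have "AE x in M. \<forall>t\<in>{1..T}. \<forall>j\<in>{1..n}. \<bar>cm t j x\<bar> \<le> 1"
    using bounded by (auto intro!: eventually_ball_finite)
  then have "AE x in M. - \<eta> * (\<Sum>t\<in>{1..T}. mh t i x) - ln n \<le> (\<Sum>t\<in>{1..T}. R t x)"
  proof eventually_elim
    case (elim x)
    have "ln (tilted_noise t x) \<le> a + exp (- a) * tilted_noise t x - 1" for t
      using ln_le_shifted[OF tilted_noise_pos] .
    then show ?case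
      using hedge_potential_bound[OF assms elim] unfolding R_def C_def
      by (smt (verit) sum_mono)
  qed
  then have "(\<integral>x. - \<eta> * (\<Sum>t\<in>{1..T}. mh t i x) - ln n \<partial>M) \<le> (\<integral>x. (\<Sum>t\<in>{1..T}. R t x) \<partial>M)"
    using R_int integral_sum_mh(1)[OF assms] by (intro integral_mono_AE) auto
  moreover have "(\<integral>x. - \<eta> * (\<Sum>t\<in>{1..T}. mh t i x) - ln n \<partial>M) = - \<eta> * (\<integral>x. (\<Sum>t\<in>{1..T}. cm t i x) \<partial>M) - ln n"
    using integral_sum_mh[OF assms] by (subst Bochner_Integration.integral_diff) (auto simp: prob_space)
  moreover have "(\<integral>x. (\<Sum>t\<in>{1..T}. R t x) \<partial>M) \<le> T * (\<eta>\<^sup>2 + a) - \<eta> * (\<integral>x. (\<Sum>t\<in>{1..T}. C t x) \<partial>M)"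
  proof -
    have "(\<integral>x. (\<Sum>t\<in>{1..T}. R t x) \<partial>M) = (\<Sum>t\<in>{1..T}. \<integral>x. R t x \<partial>M)"
      using R_int by (simp add: Bochner_Integration.integral_sum)
    also have "\<dots> \<le> (\<Sum>t\<in>{1..T}. \<eta>\<^sup>2 + a - \<eta> * (\<integral>x. C t x \<partial>M))"
      using integral_R by (rule sum_mono)
    also have "\<dots> = T * (\<eta>\<^sup>2 + a) - \<eta> * (\<integral>x. (\<Sum>t\<in>{1..T}. C t x) \<partial>M)"
      using integrable_hedge_loss unfolding C_def
      by (simp add: Bochner_Integration.integral_sum sum_subtractf sum_distrib_left)
    finally show ?thesis .
  qed
  ultimately have "\<eta> * (\<integral>x. (\<Sum>t\<in>{1..T}. C t x) \<partial>M)
      \<le> \<eta> * ((\<integral>x. (\<Sum>t\<in>{1..T}. cm t i x) \<partial>M) + ln n / \<eta> + T * \<eta> * (1 + \<nu>\<^sup>2 / 2))"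
    using eta_pos by (simp add: a_def algebra_simps power2_eq_square)
  then show ?thesis unfolding C_def using eta_pos by simp
qed

end

lemma sqrt_learning_rate:
  fixes L T :: real assumes "0 < L" "0 < T"
  shows "L / sqrt (L / T) = sqrt (T * L)" and "T * sqrt (L / T) = sqrt (T * L)"
proof -
  have "sqrt L * sqrt L = L" and "sqrt T * sqrt T = T" using assms by simp_all
  moreover have "sqrt L > 0" "sqrt T > 0" using assms by simp_all
  ultimately show "L / sqrt (L / T) = sqrt (T * L)" "T * sqrt (L / T) = sqrt (T * L)"
    by (simp_all add: real_sqrt_divide real_sqrt_mult field_simps)
qed

theorem mainTheorem3:
  fixes M :: "'a measure" and n T :: nat and \<nu> :: real
    and mh :: "nat \<Rightarrow> nat \<Rightarrow> 'a \<Rightarrow> real"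
  assumes "prob_space M"
    and "n \<ge> 2"
    and "ln (real n) \<le> real T"
    and "0 \<le> \<nu>" and "\<nu> \<le> 1"
    and meas: "\<And>t i. t \<in> {1..T} \<Longrightarrow> i \<in> {1..n} \<Longrightarrow> mh t i \<in> borel_measurable M"
    and integ: "\<And>t i. t \<in> {1..T} \<Longrightarrow> i \<in> {1..n} \<Longrightarrow> integrable M (mh t i)"
    and bounded: "\<And>t i. t \<in> {1..T} \<Longrightarrow> i \<in> {1..n} \<Longrightarrow>
        AE x in M. \<bar>cond_mean M n mh t i x\<bar> \<le> 1"
    and subg_int: "\<And>t i s. t \<in> {1..T} \<Longrightarrow> i \<in> {1..n} \<Longrightarrow>
        integrable M (\<lambda>x. exp (s * (mh t i x - cond_mean M n mh t i x)))"
    and subg: "\<And>t i s. t \<in> {1..T} \<Longrightarrow> i \<in> {1..n} \<Longrightarrow>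
        AE x in M. real_cond_exp M (past_sigma M n mh t)
            (\<lambda>x. exp (s * (mh t i x - cond_mean M n mh t i x))) x
          \<le> exp (s\<^sup>2 * \<nu>\<^sup>2 / 2)"
    and "i \<in> {1..n}"
  shows "(\<integral>x. (\<Sum>t\<in>{1..T}. \<Sum>j\<in>{1..n}.
              cond_mean M n mh t j x * hedge_p n (sqrt (ln (real n) / real T)) mh t j x) \<partial>M)
         \<le> (\<integral>x. (\<Sum>t\<in>{1..T}. cond_mean M n mh t i x) \<partial>M) + 4 * sqrt (real T * ln (real n))"
proof -
  have "0 < ln (real n)" using \<open>n \<ge> 2\<close> by simp
  moreover from this have "0 < real T" using \<open>ln (real n) \<le> real T\<close> by linarith
  ultimately have \<eta>: "0 < sqrt (ln (real n) / real T)" "sqrt (ln (real n) / real T) \<le> 1"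
    using \<open>ln (real n) \<le> real T\<close> by auto
  interpret noisy_hedge M n T \<nu> "sqrt (ln (real n) / real T)" mh
  proof (intro noisy_hedge.intro noisy_hedge_axioms.intro)
    show "1 \<le> n" using \<open>n \<ge> 2\<close> by simp
  qed (fact assms \<eta> meas integ bounded subg_int subg)+
  note rate = sqrt_learning_rate[OF \<open>0 < ln (real n)\<close> \<open>0 < real T\<close>]
  have "1 + \<nu>\<^sup>2 / 2 \<le> 3 / 2" using \<open>0 \<le> \<nu>\<close> \<open>\<nu> \<le> 1\<close> by (simp add: power_le_one)
  then have "real T * sqrt (ln (real n) / real T) * (1 + \<nu>\<^sup>2 / 2) \<le> sqrt (real T * ln (real n)) * (3 / 2)"
    unfolding rate(2) using \<open>0 < ln (real n)\<close> \<open>0 < real T\<close> by (intro mult_left_mono) simp_all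
  moreover have "0 \<le> sqrt (real T * ln (real n))" using \<open>0 < ln (real n)\<close> by simp
  ultimately show ?thesis using expected_regret_bound[OF \<open>i \<in> {1..n}\<close>] rate(1) by linarith
qed

end
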